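(* For $n,k\geqslant 0$ let $\mathfrak{f}_{n,k}$ be the number of words of length $n$ on the alphabet $\{1,\dots,k\}$ avoiding both patterns $010$ and $120$ and containing every letter of $\{1,\dots,k\}$ (so $\mathfrak{f}_{0,0}=1$, $\mathfrak{f}_{n,0}=0$ for $n\geqslant1$, $\mathfrak{f}_{0,k}=0$ for $k\geqslant 1$). Then for all $n,k\geqslant 1$, $$\mathfrak{f}_{n,k}=\sum_{p=1}^{n}\sum_{q=0}^{k-1}\mathfrak{f}_{p-1,q}\cdot\bigl(\mathfrak{f}_{n-p,k-q}+\mathfrak{f}_{n-p,k-q-1}\bigr),$$ and the generating function $F(x,y)=\sum_{n,k\geqslant0}\mathfrak{f}_{n,k}x^ny^k$ satisfies $(x+xy)F(x,y)^2-(x+1)F(x,y)+1=0$.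
   Context: A word contains a pattern $p$ if some subsequence is order-isomorphic to $p$; otherwise it avoids $p$. Avoiding $010$: no $i<j<l$ with $\omega_i=\omega_l<\omega_j$. Avoiding $120$: no $i<j<l$ with $\omega_l<\omega_i<\omega_j$. *)

theory Defs
  imports "HOL-Computational_Algebra.Formal_Power_Series"
begin

definition avoids010 :: "nat list \<Rightarrow> bool" where
  "avoids010 w \<longleftrightarrow> \<not> (\<exists>i j l. i < j \<and> j < l \<and> l < length w \<and> w ! i = w ! l \<and> w ! l < w ! j)"

definition avoids120 :: "nat list \<Rightarrow> bool" where
  "avoids120 w \<longleftrightarrow> \<not> (\<exists>i j l. i < j \<and> j < l \<and> l < length w \<and> w ! l < w ! i \<and> w ! i < w ! j)"

definition fw :: "nat \<Rightarrow> nat \<Rightarrow> nat" where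
  "fw n k = card {w :: nat list. length w = n \<and> set w = {1..k} \<and> avoids010 w \<and> avoids120 w}"

text \<open>Bivariate generating function as an element of Z[[y]][[x]] (= Z[[x,y]]):
  outer variable x, coefficient of x^n is the series sum_k f(n,k) y^k.\<close>
definition FGF :: "int fps fps" where
  "FGF = Abs_fps (\<lambda>n. Abs_fps (\<lambda>k. int (fw n k)))"

end

theory Submission
  imports Defs
begin

text \<open>
  Split a word with letters \<open>{1..k}\<close> at the first occurrence of its largest letter,
  \<open>w = u k v\<close>. With \<open>k\<close> in the middle, an occurrence of 010 or 120 straddling it
  exists exactly when some letter of \<open>u\<close> is at least some letter of \<open>v\<close>. Hence \<open>w\<close>
  avoids both patterns iff \<open>u\<close> and \<open>v\<close> do and \<open>u < v\<close> letterwise, i.e. \<open>u\<close> uses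
  exactly the letters \<open>{1..q}\<close> for some \<open>q < k\<close> and \<open>v\<close> the letters \<open>{q+1..k}\<close> or
  \<open>{q+1..k-1}\<close>; shifting \<open>v\<close> down by \<open>q\<close> gives the recurrence. For the rows
  \<open>F\<^sub>n(y)\<close> of \<open>F(x,y)\<close> the recurrence reads
  \<open>F\<^sub>n\<^sub>+\<^sub>1 + F\<^sub>n = (1 + y) \<Sum>\<^sub>i F\<^sub>i F\<^sub>n\<^sub>-\<^sub>i\<close>, the coefficient form of the quadratic equation.
\<close>

section \<open>Occurrences of three-letter patterns\<close>

definition has_pattern :: "(nat \<Rightarrow> nat \<Rightarrow> nat \<Rightarrow> bool) \<Rightarrow> nat list \<Rightarrow> bool" where
  "has_pattern P w \<longleftrightarrow> (\<exists>i j l. i < j \<and> j < l \<and> l < length w \<and> P (w ! i) (w ! j) (w ! l))"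

lemma avoids010_iff_not_has_pattern:
  "avoids010 w \<longleftrightarrow> \<not> has_pattern (\<lambda>a b c. a = c \<and> c < b) w"
  unfolding avoids010_def has_pattern_def by (simp add: conj_assoc)

lemma avoids120_iff_not_has_pattern:
  "avoids120 w \<longleftrightarrow> \<not> has_pattern (\<lambda>a b c. c < a \<and> a < b) w"
  unfolding avoids120_def has_pattern_def by (simp add: conj_assoc)

lemma has_pattern_append_left: "has_pattern P u \<Longrightarrow> has_pattern P (u @ v)"
  unfolding has_pattern_def
proof (elim exE conjE)
  fix i j l assume "i < j" "j < l" "l < length u" "P (u ! i) (u ! j) (u ! l)"
  then show "\<exists>i j l. i < j \<and> j < l \<and> l < length (u @ v) \<and> P ((u @ v) ! i) ((u @ v) ! j) ((u @ v) ! l)"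
    by (intro exI[of _ i] exI[of _ j] exI[of _ l]) (simp add: nth_append)
qed

lemma has_pattern_append_right: "has_pattern P v \<Longrightarrow> has_pattern P (u @ v)"
  unfolding has_pattern_def
proof (elim exE conjE)
  fix i j l assume "i < j" "j < l" "l < length v" "P (v ! i) (v ! j) (v ! l)"
  then show "\<exists>i j l. i < j \<and> j < l \<and> l < length (u @ v) \<and> P ((u @ v) ! i) ((u @ v) ! j) ((u @ v) ! l)"
    by (intro exI[of _ "length u + i"] exI[of _ "length u + j"] exI[of _ "length u + l"]) simp
qed

lemma has_pattern_across:
  assumes "x \<in> set u" "z \<in> set v" "P x c z"
  shows "has_pattern P (u @ c # v)"
proof -
  obtain i l where "i < length u" "u ! i = x" "l < length v" "v ! l = z"
    using assms(1,2) by (auto simp: in_set_conv_nth)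
  then show ?thesis unfolding has_pattern_def using assms(3)
    by (intro exI[of _ i] exI[of _ "length u"] exI[of _ "Suc (length u + l)"])
       (auto simp: nth_append)
qed

lemma has_pattern_append_Cons_cases:
  assumes "has_pattern P (u @ c # v)"
  obtains (left) "has_pattern P u"
  | (right) "has_pattern P v"
  | (ends_at) x y where "x \<in> set u" "y \<in> set u" "P x y c"
  | (starts_at) y z where "y \<in> set v" "z \<in> set v" "P c y z"
  | (across) x y z where "x \<in> set u" "y \<in> set (u @ c # v)" "z \<in> set v" "P x y z"
proof -
  let ?w = "u @ c # v" and ?m = "length u"
  obtain i j l where ijl: "i < j" "j < l" "l < length ?w" "P (?w ! i) (?w ! j) (?w ! l)"
    using assms unfolding has_pattern_def by blast
  have w_u: "?w ! x = u ! x" if "x < ?m" for x using that by (simp add: nth_append)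
  have w_v: "?w ! x = v ! (x - Suc ?m)" and in_v: "x - Suc ?m < length v"
    if "?m < x" "x < length ?w" for x using that by (auto simp: nth_append)
  consider "l < ?m" | "?m < i" | "l = ?m" | "i = ?m" | "i < ?m" "?m < l"
    by linarith
  then show ?thesis
  proof cases
    case 1
    then have "has_pattern P u" unfolding has_pattern_def using ijl w_u
      by (intro exI[of _ i] exI[of _ j] exI[of _ l]) auto
    then show ?thesis by (rule left)
  next
    case 2
    then have "has_pattern P v" unfolding has_pattern_def using ijl w_v in_v
      by (intro exI[of _ "i - Suc ?m"] exI[of _ "j - Suc ?m"] exI[of _ "l - Suc ?m"]) auto
    then show ?thesis by (rule right)
  next
    case 3
    then have "P (u ! i) (u ! j) c" using ijl w_u by (simp add: nth_append)
    moreover have "u ! i \<in> set u" "u ! j \<in> set u" using ijl 3 by simp_all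
    ultimately show ?thesis by (intro ends_at)
  next
    case 4
    then have "P c (v ! (j - Suc ?m)) (v ! (l - Suc ?m))" using ijl w_v by simp
    moreover have "v ! (j - Suc ?m) \<in> set v" "v ! (l - Suc ?m) \<in> set v"
      using ijl 4 in_v by simp_all
    ultimately show ?thesis by (intro starts_at)
  next
    case 5
    then have "P (u ! i) (?w ! j) (v ! (l - Suc ?m))" using ijl w_u w_v by simp
    moreover have "u ! i \<in> set u" "?w ! j \<in> set ?w" "v ! (l - Suc ?m) \<in> set v"
      using ijl 5 in_v by (simp_all only: nth_mem)
    ultimately show ?thesis by (intro across)
  qed
qed

lemma has_pattern_map:
  "has_pattern P (map f w) \<longleftrightarrow> has_pattern (\<lambda>a b c. P (f a) (f b) (f c)) w"
proof -
  have "P (map f w ! i) (map f w ! j) (map f w ! l) \<longleftrightarrow> P (f (w ! i)) (f (w ! j)) (f (w ! l))"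
    if "i < j" "j < l" "l < length w" for i j l
    using that by simp
  then show ?thesis unfolding has_pattern_def by (metis length_map)
qed

definition avoids_010_120 :: "nat list \<Rightarrow> bool" where
  "avoids_010_120 w \<longleftrightarrow> avoids010 w \<and> avoids120 w"

lemmas avoids_010_120_iff =
  avoids_010_120_def avoids010_iff_not_has_pattern avoids120_iff_not_has_pattern

lemma avoids_010_120_map_strict_mono:
  "strict_mono f \<Longrightarrow> avoids_010_120 (map f w) \<longleftrightarrow> avoids_010_120 w"
  unfolding avoids_010_120_iff has_pattern_map by (simp add: strict_mono_less strict_mono_eq)

lemma avoids_010_120_append_max:
  assumes u_less: "\<forall>x\<in>set u. x < c" and v_le: "\<forall>y\<in>set v. y \<le> c"
  shows "avoids_010_120 (u @ c # v) \<longleftrightarrow>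
    avoids_010_120 u \<and> avoids_010_120 v \<and> (\<forall>x\<in>set u. \<forall>y\<in>set v. x < y)"
proof
  assume av: "avoids_010_120 (u @ c # v)"
  have "avoids_010_120 u" "avoids_010_120 v"
    using av has_pattern_append_left[of _ u "c # v"] has_pattern_append_right[of _ v "u @ [c]"]
    unfolding avoids_010_120_iff by auto
  moreover have "x < y" if "x \<in> set u" "y \<in> set v" for x y
  proof (rule ccontr)
    assume "\<not> x < y"
    then have "x = y \<and> y < c \<or> y < x \<and> x < c" using u_less \<open>x \<in> set u\<close> by auto
    then show False
      using av has_pattern_across[OF that, of "\<lambda>a b c. a = c \<and> c < b"]
        has_pattern_across[OF that, of "\<lambda>a b c. c < a \<and> a < b"]
      unfolding avoids_010_120_iff by blast
  qed
  ultimately show "avoids_010_120 u \<and> avoids_010_120 v \<and> (\<forall>x\<in>set u. \<forall>y\<in>set v. x < y)"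
    by blast
next
  assume "avoids_010_120 u \<and> avoids_010_120 v \<and> (\<forall>x\<in>set u. \<forall>y\<in>set v. x < y)"
  then have av: "avoids_010_120 u" "avoids_010_120 v" and u_v: "\<forall>x\<in>set u. \<forall>y\<in>set v. x < y"
    by blast+
  have no_straddle: "\<not> has_pattern P (u @ c # v)"
    if "\<not> has_pattern P u" "\<not> has_pattern P v" "\<And>x y. x < c \<Longrightarrow> \<not> P x y c"
      "\<And>y z. y \<le> c \<Longrightarrow> \<not> P c y z" "\<And>x y z. x < z \<Longrightarrow> \<not> P x y z" for P
  proof
    assume "has_pattern P (u @ c # v)"
    then show False
    proof (cases rule: has_pattern_append_Cons_cases)
      case left
      then show False using that(1) by blast
    next
      case right
      then show False using that(2) by blast
    next
      case (ends_at x y)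
      then show False using that(3) u_less by blast
    next
      case (starts_at y z)
      then show False using that(4) v_le by blast
    next
      case (across x y z)
      then show False using that(5) u_v by blast
    qed
  qed
  show "avoids_010_120 (u @ c # v)"
    unfolding avoids_010_120_iff
    by (intro conjI no_straddle) (use av in \<open>auto simp: avoids_010_120_iff\<close>)
qed

section \<open>Splitting a word at its first largest letter\<close>

definition avoiders :: "nat \<Rightarrow> nat set \<Rightarrow> nat list set" where
  "avoiders n A = {w. length w = n \<and> set w = A \<and> avoids_010_120 w}"

lemma fw_eq_card_avoiders: "fw n k = card (avoiders n {1..k})"
  by (simp add: fw_def avoiders_def avoids_010_120_def)

lemma finite_avoiders: "finite (avoiders n A)"
proof (cases "finite A")
  case True
  have "avoiders n A \<subseteq> {w. set w \<subseteq> A \<and> length w = n}"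
    by (auto simp: avoiders_def)
  then show ?thesis using finite_lists_length_eq[OF True] finite_subset by blast
next
  case False
  then have "avoiders n A = {}" by (auto simp: avoiders_def)
  then show ?thesis by simp
qed

lemma avoiders_disjoint: "A \<noteq> B \<Longrightarrow> avoiders n A \<inter> avoiders n B = {}"
  by (auto simp: avoiders_def)

lemma avoiders_image_add:
  "avoiders n ((+) a ` A) = map ((+) a) ` avoiders n A"
proof
  have mono: "strict_mono ((+) a)" by (simp add: strict_mono_def)
  show "map ((+) a) ` avoiders n A \<subseteq> avoiders n ((+) a ` A)"
    by (auto simp: avoiders_def avoids_010_120_map_strict_mono[OF mono])
  show "avoiders n ((+) a ` A) \<subseteq> map ((+) a) ` avoiders n A"
  proof
    fix w assume w: "w \<in> avoiders n ((+) a ` A)"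
    define w' where "w' = map (\<lambda>x. x - a) w"
    have w_eq: "w = map ((+) a) w'"
      unfolding w'_def map_map by (rule map_idI[symmetric]) (use w in \<open>auto simp: avoiders_def\<close>)
    have "(+) a ` set w' = (+) a ` A" using w by (simp add: w_eq avoiders_def)
    then have "set w' = A" by (simp add: inj_image_eq_iff)
    then have "w' \<in> avoiders n A"
      using w avoids_010_120_map_strict_mono[OF mono, of w'] by (simp add: w_eq avoiders_def)
    then show "w \<in> map ((+) a) ` avoiders n A" using w_eq by blast
  qed
qed

lemma card_avoiders_interval: "card (avoiders n {a + 1..a + k}) = fw n k"
proof -
  have "(+) a ` {1..k} = {a + 1..a + k}" by (simp add: add.commute)
  then have "card (avoiders n {a + 1..a + k}) = card (map ((+) a) ` avoiders n {1..k})"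
    by (metis avoiders_image_add)
  also have "\<dots> = fw n k"
    unfolding fw_eq_card_avoiders by (rule card_image) (simp add: inj_on_def)
  finally show ?thesis .
qed

lemma split_interval_ordered:
  fixes A B :: "nat set"
  assumes union: "A \<union> B = {1..k}" and less: "\<forall>x\<in>A. \<forall>y\<in>B. x < y"
  obtains q where "A = {1..q}" "B = {q + 1..k}"
proof (cases "B = {}")
  case True
  then show ?thesis using that[of k] union by simp
next
  case False
  define b where "b = Min B"
  have "finite B" using union finite_subset[of B "{1..k}"] by blast
  then have b_in: "b \<in> B" and b_le: "\<And>y. y \<in> B \<Longrightarrow> b \<le> y" using False by (simp_all add: b_def)
  have mem: "x \<in> A \<or> x \<in> B \<longleftrightarrow> 1 \<le> x \<and> x \<le> k" for x
    using union by (metis Un_iff atLeastAtMost_iff)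
  have "1 \<le> b" "b \<le> k" using mem b_in by blast+
  have "A = {1..b - 1}"
  proof (intro equalityI subsetI)
    fix x assume "x \<in> A"
    then show "x \<in> {1..b - 1}" using mem less b_in by fastforce
  next
    fix x assume "x \<in> {1..b - 1}"
    then show "x \<in> A" using mem[of x] b_le[of x] \<open>b \<le> k\<close> by auto
  qed
  moreover have "B = {b - 1 + 1..k}"
  proof (intro equalityI subsetI)
    fix y assume "y \<in> B"
    then show "y \<in> {b - 1 + 1..k}" using mem[of y] b_le[of y] \<open>1 \<le> b\<close> by auto
  next
    fix y assume "y \<in> {b - 1 + 1..k}"
    then show "y \<in> B" using mem[of y] less b_in \<open>1 \<le> b\<close> by fastforce
  qed
  ultimately show ?thesis by (rule that)
qed

lemma takeWhile_append_Cons_not_in: "x \<notin> set u \<Longrightarrow> takeWhile (\<lambda>y. y \<noteq> x) (u @ x # v) = u"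
  by (induction u) auto

lemma append_Cons_eq_append_Cons_iff:
  assumes "x \<notin> set u" and "x \<notin> set u'"
  shows "u @ x # v = u' @ x # v' \<longleftrightarrow> u = u' \<and> v = v'"
  by (metis assms same_append_eq list.inject takeWhile_append_Cons_not_in)

text \<open>\<open>((p, q), u, v)\<close> stands for the word \<open>u k v\<close> with its first \<open>k\<close> at position \<open>p\<close> and
  \<open>q\<close> the largest letter of \<open>u\<close>.\<close>

definition first_max_decompositions ::
    "nat \<Rightarrow> nat \<Rightarrow> ((nat \<times> nat) \<times> nat list \<times> nat list) set" where
  "first_max_decompositions n k =
    Sigma ({1..n} \<times> {0..k - 1}) (\<lambda>(p, q).
      avoiders (p - 1) {1..q} \<times> (avoiders (n - p) {q + 1..k} \<union> avoiders (n - p) {q + 1..k - 1}))"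

lemma join_first_max_decomposition:
  assumes "((p, q), u, v) \<in> first_max_decompositions n k" and "1 \<le> k"
  shows "u @ k # v \<in> avoiders n {1..k}" and "k \<notin> set u" and "p = length u + 1" and "set u = {1..q}"
proof -
  have pq: "1 \<le> p" "p \<le> n" "q < k" and u: "u \<in> avoiders (p - 1) {1..q}"
    using assms by (auto simp: first_max_decompositions_def)
  obtain j where j: "j = k \<or> j = k - 1" and v: "v \<in> avoiders (n - p) {q + 1..j}"
    using assms by (auto simp: first_max_decompositions_def)
  show "p = length u + 1" "set u = {1..q}" using u pq by (simp_all add: avoiders_def)
  then show "k \<notin> set u" using pq by simp
  have "set (u @ k # v) = {1..q} \<union> {k} \<union> {q + 1..j}"
    using u v by (auto simp: avoiders_def)
  also have "\<dots> = {1..k}" using pq j by auto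
  finally have "set (u @ k # v) = {1..k}" .
  moreover have "avoids_010_120 (u @ k # v)"
    using u v pq j by (subst avoids_010_120_append_max) (auto simp: avoiders_def)
  moreover have "length (u @ k # v) = n" using u v pq by (simp add: avoiders_def)
  ultimately show "u @ k # v \<in> avoiders n {1..k}" by (simp add: avoiders_def)
qed

lemma split_at_first_max:
  assumes w: "w \<in> avoiders n {1..k}" and "1 \<le> k"
  obtains p q u v where "((p, q), u, v) \<in> first_max_decompositions n k" and "w = u @ k # v"
proof -
  have "k \<in> set w" using assms by (simp add: avoiders_def)
  then obtain u v where w_eq: "w = u @ k # v" and "k \<notin> set u"
    using split_list_first by metis
  have set_w: "set u \<union> insert k (set v) = {1..k}" using w by (simp add: w_eq avoiders_def)
  then have v_le: "\<forall>y\<in>set v. y \<le> k" by auto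
  have u_less: "\<forall>x\<in>set u. x < k"
  proof
    fix x assume "x \<in> set u"
    then have "x \<in> {1..k}" "x \<noteq> k" using set_w \<open>k \<notin> set u\<close> by blast+
    then show "x < k" by simp
  qed
  then have av: "avoids_010_120 u" "avoids_010_120 v" and u_v: "\<forall>x\<in>set u. \<forall>y\<in>set v. x < y"
    using w avoids_010_120_append_max[OF u_less v_le] by (simp_all add: w_eq avoiders_def)
  have "\<forall>x\<in>set u. \<forall>y\<in>insert k (set v). x < y" using u_less u_v by simp
  then obtain q where q: "set u = {1..q}" "insert k (set v) = {q + 1..k}"
    by (rule split_interval_ordered[OF set_w])
  have "k \<in> {q + 1..k}" using q(2) by blast
  then have "q < k" by simp
  have "set v = {q + 1..k} \<or> set v = {q + 1..k - 1}"
  proof (cases "k \<in> set v")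
    case True
    then show ?thesis using q(2) by (simp add: insert_absorb)
  next
    case False
    then have "set v = insert k (set v) - {k}" by simp
    also have "\<dots> = {q + 1..k} - {k}" by (simp only: q(2))
    also have "\<dots> = {q + 1..k - 1}" by auto
    finally show ?thesis by blast
  qed
  then have "((length u + 1, q), u, v) \<in> first_max_decompositions n k"
    using w av q \<open>q < k\<close> by (auto simp: first_max_decompositions_def avoiders_def w_eq)
  then show ?thesis using w_eq by (rule that)
qed

lemma bij_betw_first_max_decompositions:
  assumes "1 \<le> k"
  shows "bij_betw (\<lambda>((p, q), u, v). u @ k # v) (first_max_decompositions n k) (avoiders n {1..k})"
proof (rule bij_betw_imageI)
  note join = join_first_max_decomposition[OF _ assms]
  show "inj_on (\<lambda>((p, q), u, v). u @ k # v) (first_max_decompositions n k)"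
  proof (rule inj_onI, unfold split_paired_all case_prod_conv)
    fix p q u v p' q' u' v'
    assume d: "((p, q), u, v) \<in> first_max_decompositions n k"
      and d': "((p', q'), u', v') \<in> first_max_decompositions n k"
      and eq: "u @ k # v = u' @ k # v'"
    have "u = u'" "v = v'"
      using eq append_Cons_eq_append_Cons_iff[OF join(2)[OF d] join(2)[OF d']] by simp_all
    moreover have "p = p'" using join(3)[OF d] join(3)[OF d'] \<open>u = u'\<close> by simp
    moreover have "q = q'"
      using join(4)[OF d] join(4)[OF d'] \<open>u = u'\<close> by (metis card_atLeastAtMost diff_Suc_1)
    ultimately show "((p, q), u, v) = ((p', q'), u', v')" by simp
  qed
  show "(\<lambda>((p, q), u, v). u @ k # v) ` first_max_decompositions n k = avoiders n {1..k}"
  proof (intro equalityI subsetI)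
    fix w assume "w \<in> (\<lambda>((p, q), u, v). u @ k # v) ` first_max_decompositions n k"
    then obtain p q u v where "((p, q), u, v) \<in> first_max_decompositions n k" "w = u @ k # v"
      by auto
    then show "w \<in> avoiders n {1..k}" using join(1) by blast
  next
    fix w assume "w \<in> avoiders n {1..k}"
    then obtain p q u v where "((p, q), u, v) \<in> first_max_decompositions n k" "w = u @ k # v"
      using split_at_first_max[OF _ assms] by blast
    then show "w \<in> (\<lambda>((p, q), u, v). u @ k # v) ` first_max_decompositions n k"
      by (simp add: rev_image_eqI)
  qed
qed

lemma card_first_max_decompositions:
  assumes "1 \<le> k"
  shows "card (first_max_decompositions n k) =
    (\<Sum>p = 1..n. \<Sum>q = 0..k - 1. fw (p - 1) q * (fw (n - p) (k - q) + fw (n - p) (k - q - 1)))"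
proof -
  have block: "card (avoiders (p - 1) {1..q} \<times> (avoiders (n - p) {q + 1..k} \<union> avoiders (n - p) {q + 1..k - 1}))
      = fw (p - 1) q * (fw (n - p) (k - q) + fw (n - p) (k - q - 1))" if "q \<le> k - 1" for p q
  proof -
    have "k \<in> {q + 1..k}" "k \<notin> {q + 1..k - 1}" using that assms by auto
    then have disj: "avoiders (n - p) {q + 1..k} \<inter> avoiders (n - p) {q + 1..k - 1} = {}"
      by (intro avoiders_disjoint) blast
    have "card (avoiders (n - p) {q + 1..k}) = fw (n - p) (k - q)"
      using card_avoiders_interval[of "n - p" q "k - q"] that assms by simp
    moreover have "card (avoiders (n - p) {q + 1..k - 1}) = fw (n - p) (k - q - 1)"
      using card_avoiders_interval[of "n - p" q "k - q - 1"] that assms by simp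
    ultimately show ?thesis
      by (simp only: card_cartesian_product card_Un_disjoint[OF finite_avoiders finite_avoiders disj]
          fw_eq_card_avoiders[of "p - 1", symmetric])
  qed
  have "card (first_max_decompositions n k) = (\<Sum>(p, q) \<in> {1..n} \<times> {0..k - 1}.
      card (avoiders (p - 1) {1..q} \<times> (avoiders (n - p) {q + 1..k} \<union> avoiders (n - p) {q + 1..k - 1})))"
    unfolding first_max_decompositions_def
    by (subst card_SigmaI) (auto simp: finite_avoiders intro!: sum.cong)
  also have "\<dots> = (\<Sum>p = 1..n. \<Sum>q = 0..k - 1. fw (p - 1) q * (fw (n - p) (k - q) + fw (n - p) (k - q - 1)))"
    unfolding sum.cartesian_product
  proof (rule sum.cong[OF refl], unfold split_paired_all case_prod_conv)
    fix p q assume "(p, q) \<in> {1..n} \<times> {0..k - 1}"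
    then show "card (avoiders (p - 1) {1..q} \<times> (avoiders (n - p) {q + 1..k} \<union> avoiders (n - p) {q + 1..k - 1}))
        = fw (p - 1) q * (fw (n - p) (k - q) + fw (n - p) (k - q - 1))"
      by (intro block) simp
  qed
  finally show ?thesis .
qed

theorem fw_recurrence:
  assumes "1 \<le> k"
  shows "fw n k = (\<Sum>p = 1..n. \<Sum>q = 0..k - 1.
    fw (p - 1) q * (fw (n - p) (k - q) + fw (n - p) (k - q - 1)))"
  using bij_betw_same_card[OF bij_betw_first_max_decompositions[OF assms]]
  by (simp add: fw_eq_card_avoiders card_first_max_decompositions[OF assms])

section \<open>The generating function\<close>

unbundle fps_syntax

lemma fw_0_right: "fw n 0 = (if n = 0 then 1 else 0)"
proof -
  have "{w :: nat list. length w = n \<and> set w = {1..0} \<and> avoids010 w \<and> avoids120 w}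
      = (if n = 0 then {[]} else {})"
    by (auto simp: avoids010_def avoids120_def)
  then show ?thesis by (simp add: fw_def)
qed

lemma fw_0_left: "fw 0 k = (if k = 0 then 1 else 0)"
proof -
  have "{w :: nat list. length w = 0 \<and> set w = {1..k} \<and> avoids010 w \<and> avoids120 w}
      = (if k = 0 then {[]} else {})"
    by (auto simp: avoids010_def avoids120_def)
  then show ?thesis by (simp add: fw_def)
qed

lemma sum_fw_mult_fw_0_right: "(\<Sum>i = 0..m. fw i k * fw (m - i) 0) = fw m k"
proof -
  have "(\<Sum>i = 0..m. fw i k * fw (m - i) 0) = (\<Sum>i = 0..m. if i = m then fw i k else 0)"
    by (rule sum.cong) (auto simp: fw_0_right)
  then show ?thesis by simp
qed

lemma fw_Suc_add_fw:
  "fw (Suc m) k + fw m k =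
    (\<Sum>i = 0..m. \<Sum>j = 0..k. fw i j * fw (m - i) (k - j))
    + (\<Sum>i = 0..m. \<Sum>j < k. fw i j * fw (m - i) (k - 1 - j))"
proof (cases k)
  case 0
  then show ?thesis using sum_fw_mult_fw_0_right[where m = m and k = 0] by (simp add: fw_0_right)
next
  case (Suc k')
  have "fw (Suc m) k = (\<Sum>i = 0..m. \<Sum>q = 0..k'. fw i q * (fw (m - i) (k - q) + fw (m - i) (k' - q)))"
    using fw_recurrence[of k "Suc m"] Suc
    unfolding One_nat_def sum.shift_bounds_cl_Suc_ivl by simp
  also have "\<dots> = (\<Sum>i = 0..m. \<Sum>q = 0..k'. fw i q * fw (m - i) (k - q))
      + (\<Sum>i = 0..m. \<Sum>q < k. fw i q * fw (m - i) (k - 1 - q))"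
    by (simp add: Suc algebra_simps sum.distrib atLeast0AtMost lessThan_Suc_atMost)
  finally have "fw (Suc m) k = \<dots>" .
  moreover have "(\<Sum>i = 0..m. \<Sum>j = 0..k. fw i j * fw (m - i) (k - j))
      = (\<Sum>i = 0..m. \<Sum>q = 0..k'. fw i q * fw (m - i) (k - q)) + fw m k"
    using sum_fw_mult_fw_0_right[where m = m and k = k] by (simp add: Suc sum.distrib)
  ultimately show ?thesis by simp
qed

lemma FGF_nth_nth [simp]: "FGF $ n $ k = int (fw n k)"
  by (simp add: FGF_def)

lemma FGF_square_nth_nth:
  "(FGF ^ 2) $ m $ k = int (\<Sum>i = 0..m. \<Sum>j = 0..k. fw i j * fw (m - i) (k - j))"
  by (simp add: power2_eq_square fps_mult_nth fps_sum_nth)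

lemma FGF_row_recurrence: "FGF $ Suc m + FGF $ m = (1 + fps_X) * (FGF ^ 2) $ m"
proof (rule fps_ext)
  fix k
  have "((1 + fps_X) * (FGF ^ 2) $ m) $ k
      = int (\<Sum>i = 0..m. \<Sum>j = 0..k. fw i j * fw (m - i) (k - j))
        + int (\<Sum>i = 0..m. \<Sum>j < k. fw i j * fw (m - i) (k - 1 - j))"
    by (cases k) (simp_all add: distrib_right FGF_square_nth_nth atLeast0AtMost lessThan_Suc_atMost)
  then show "(FGF $ Suc m + FGF $ m) $ k = ((1 + fps_X) * (FGF ^ 2) $ m) $ k"
    using arg_cong[OF fw_Suc_add_fw[of m k], of int] by simp
qed

theorem FGF_equation:
  "(fps_X + fps_X * fps_const fps_X) * FGF ^ 2 - (fps_X + 1) * FGF + 1 = 0"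
proof (rule fps_ext)
  fix n
  show "((fps_X + fps_X * fps_const fps_X) * FGF ^ 2 - (fps_X + 1) * FGF + 1) $ n = 0 $ n"
  proof (cases n)
    case 0
    have "FGF $ 0 = 1" by (rule fps_ext) (simp add: fw_0_left)
    then show ?thesis using 0 by simp
  next
    case (Suc m)
    then show ?thesis using FGF_row_recurrence[of m] by (simp add: algebra_simps)
  qed
qed

theorem mainTheorem4:
  shows "(\<forall>n k. 1 \<le> n \<longrightarrow> 1 \<le> k \<longrightarrow>
           fw n k = (\<Sum>p = 1..n. \<Sum>q = 0..k - 1.
                      fw (p - 1) q * (fw (n - p) (k - q) + fw (n - p) (k - q - 1))))
       \<and> (fps_X + fps_X * fps_const fps_X) * FGF ^ 2 - (fps_X + 1) * FGF + 1 = 0"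
  using fw_recurrence FGF_equation by blast

end
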